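(* Let $N\ge 1$ be an integer and let $\beta,\sigma,\gamma,\xi,\eta,D,R>0$. For $\mathbf{y}=(\mathbf{V}_1,\dots,\mathbf{V}_N,\mathbf{X}_1,\dots,\mathbf{X}_N)\in\mathbb{R}^{4N}$, with $\mathbf{V}_i=(V_{i1},V_{i2})$, $\mathbf{X}_i=(X_{i1},X_{i2})$, define $\mathbf{q}(\mathbf{y})=(\mathbf{q}_1,\mathbf{q}_2)$ by $$q_{1,ik}=\frac{\beta}{N}\sum_{j=1}^N\frac{V_{jk}-V_{ik}}{\left(1+\|\mathbf{X}_j-\mathbf{X}_i\|^2/R^2\right)^{\sigma}},\qquad q_{2,ik}=V_{ik},\qquad k=1,2,$$ and, for $r>0$ and $\mathbf{y},\mathbf{z}\in\mathbb{R}^{4N}$ (with position components $X_{ik}$ of $\mathbf{y}$ and $Z_{ik}$ of $\mathbf{z}$), define $\mathbf{p}(r,\mathbf{y},\mathbf{z})=(\mathbf{p}_1,\mathbf{p}_2)$ with $\mathbf{p}_2=0$ and $$p_{1,i1}=\sum_{j=1}^N\int_{-R}^{R}e^{-\frac{(X_{i2}-Z_{j2}-w)^2}{4rD}}\left(e^{-\frac{(X_{i1}-Z_{j1}-\sqrt{R^2-w^2})^2}{4rD}}-e^{-\frac{(X_{i1}-Z_{j1}+\sqrt{R^2-w^2})^2}{4rD}}\right)dw,$$ $$p_{1,i2}=\sum_{j=1}^N\int_{-R}^{R}e^{-\frac{(X_{i1}-Z_{j1}-w)^2}{4rD}}\left(e^{-\frac{(X_{i2}-Z_{j2}-\sqrt{R^2-w^2})^2}{4rD}}-e^{-\frac{(X_{i2}-Z_{j2}+\sqrt{R^2-w^2})^2}{4rD}}\right)dw.$$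 Let $C(r)=\dfrac{\gamma\xi e^{-\eta r}}{4\pi rD}$ for $r>0$, fix $\mathbf{y}_0\in\mathbb{R}^{4N}$, and consider the integral equation $$\mathbf{y}(t)=\mathbf{y}_0+\int_0^t\Big[\mathbf{q}(\mathbf{y}(\tau))+\mathbf{h}(t,\tau,\mathbf{y})\Big]d\tau,\qquad \mathbf{h}(t,\tau,\mathbf{y}):=\int_\tau^t C(s-\tau)\,\mathbf{p}(s-\tau,\mathbf{y}(s),\mathbf{y}(\tau))\,ds. \tag{E}$$ Let $a,b>0$, and let $M_1=\max\{\|\mathbf{q}(\mathbf{y})\|:\|\mathbf{y}-\mathbf{y}_0\|\le b\}$, let $M_2$ be the maximum of $\|\mathbf{h}(t,\tau,\mathbf{y})\|$ over $0\le\tau\le t\le a$ and continuous $\mathbf{y}$ with $\|\mathbf{y}(s)-\mathbf{y}_0\|\le b$, let $L_1>0$ be a Lipschitz constant of $\mathbf{q}$ on $\{\|\mathbf{y}-\mathbf{y}_0\|\le b\}$, and let $L_2>0$ be a constant such that for all $0\le\tau< s\le a$ and all $\mathbf{y}_1,\mathbf{y}_2$ with values in that ball, $$\|\mathbf{p}(s-\tau,\mathbf{y}_1(s),\mathbf{y}_1(\tau))-\mathbf{p}(s-\tau,\mathbf{y}_2(s),\mathbf{y}_2(\tau))\|\le\sqrt{4D(s-\tau)}\,L_2\big(\|\mathbf{y}_1(s)-\mathbf{y}_2(s)\|+\|\mathbf{y}_1(\tau)-\mathbf{y}_2(\tau)\|\big).$$ Let $M=\int_0^{+\infty}|C(z)|\sqrt{4Dz}\,dz$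 and $$T=\min\left[a,\frac{b}{M_1+M_2},\frac{1}{L_1+2L_2M}\right].$$ Then equation (E) has a unique solution on $[0,T]$ (in the class of continuous functions $\mathbf{y}:[0,T]\to\mathbb{R}^{4N}$ with $\sup_{0\le t\le T}\|\mathbf{y}(t)-\mathbf{y}_0\|\le b$).
   Context: Equation (E) is the integrated form of a hybrid model for $N$ particles in $\mathbb{R}^2$ with positions $\mathbf{X}_i$ and velocities $\mathbf{V}_i$, subject to Cucker–Smale-type alignment and to chemotaxis towards a signal $f$ solving $\partial_t f=D\Delta f+\xi\sum_j\chi_{B(\mathbf{X}_j,R)}-\eta f$ on $\mathbb{R}^2$ with $f(\cdot,0)=0$; the gradient of $f$ has been written explicitly via the heat kernel, giving the memory term $\mathbf{h}$. $\|\cdot\|$ is the Euclidean norm. *)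

theory Defs
  imports "HOL-Analysis.Analysis"
begin

text \<open>State vector y = (V, X) in R^{4N}: V = (V_1,...,V_N), X = (X_1,...,X_N), each V_i, X_i in R^2.
  The particle index set is the finite type 'n with N = CARD('n).  The norm on the product
  type is sqrt(norm V ^ 2 + norm X ^ 2), i.e. the Euclidean norm of R^{4N}.\<close>

type_synonym 'n state = "(real^2^'n) \<times> (real^2^'n)"

definition qfun :: "real \<Rightarrow> real \<Rightarrow> real \<Rightarrow> 'n::finite state \<Rightarrow> 'n state" where
  "qfun \<beta> \<sigma> R y =
     ((\<chi> i. \<chi> k. \<beta> / real CARD('n) *
        (\<Sum>j\<in>UNIV. (fst y $ j $ k - fst y $ i $ k) /
            (1 + (norm (snd y $ j - snd y $ i))^2 / R^2) powr \<sigma>)),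
      fst y)"

text \<open>The w-integral appearing in p: u is the coordinate difference entering with
  sqrt(R^2-w^2), v the one entering with w.\<close>
definition pker :: "real \<Rightarrow> real \<Rightarrow> real \<Rightarrow> real \<Rightarrow> real \<Rightarrow> real" where
  "pker D R r u v = integral {-R..R} (\<lambda>w.
      exp (- ((v - w)^2) / (4*r*D)) *
      (exp (- ((u - sqrt (R^2 - w^2))^2) / (4*r*D))
       - exp (- ((u + sqrt (R^2 - w^2))^2) / (4*r*D))))"

definition pfun :: "real \<Rightarrow> real \<Rightarrow> real \<Rightarrow> 'n::finite state \<Rightarrow> 'n state \<Rightarrow> 'n state" where
  "pfun D R r y z =
     ((\<chi> i. \<chi> k. if k = 1
         then (\<Sum>j\<in>UNIV. pker D R r (snd y $ i $ 1 - snd z $ j $ 1) (snd y $ i $ 2 - snd z $ j $ 2))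
         else (\<Sum>j\<in>UNIV. pker D R r (snd y $ i $ 2 - snd z $ j $ 2) (snd y $ i $ 1 - snd z $ j $ 1))),
      0)"

definition Cfun :: "real \<Rightarrow> real \<Rightarrow> real \<Rightarrow> real \<Rightarrow> real \<Rightarrow> real" where
  "Cfun \<gamma> \<xi> \<eta> D r = \<gamma> * \<xi> * exp (- \<eta> * r) / (4 * pi * r * D)"

definition hfun :: "real \<Rightarrow> real \<Rightarrow> real \<Rightarrow> real \<Rightarrow> real \<Rightarrow> real \<Rightarrow> real \<Rightarrow> (real \<Rightarrow> 'n::finite state) \<Rightarrow> 'n state" where
  "hfun \<gamma> \<xi> \<eta> D R t \<tau> y =
     integral {\<tau>..t} (\<lambda>s. Cfun \<gamma> \<xi> \<eta> D (s - \<tau>) *\<^sub>R pfun D R (s - \<tau>) (y s) (y \<tau>))"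

definition is_solution :: "real \<Rightarrow> real \<Rightarrow> real \<Rightarrow> real \<Rightarrow> real \<Rightarrow> real \<Rightarrow> real \<Rightarrow> real \<Rightarrow> real
    \<Rightarrow> 'n::finite state \<Rightarrow> (real \<Rightarrow> 'n state) \<Rightarrow> bool" where
  "is_solution \<beta> \<sigma> \<gamma> \<xi> \<eta> D R T b y0 y \<longleftrightarrow>
     continuous_on {0..T} y \<and>
     (\<forall>t\<in>{0..T}. norm (y t - y0) \<le> b) \<and>
     (\<forall>t\<in>{0..T}. ((\<lambda>\<tau>. qfun \<beta> \<sigma> R (y \<tau>) + hfun \<gamma> \<xi> \<eta> D R t \<tau> y) has_integral (y t - y0)) {0..t})"

end

theory Submission
  imports Defs
begin

text \<open>The right-hand side of (E) is a Picard map on continuous paths with values in the closed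
  ball of radius \<open>b\<close> around \<open>y0\<close>. Its memory term is weakly singular: the heat-kernel
  integral \<open>p(r, \<dots>)\<close> is \<open>O(\<surd>r)\<close> while \<open>C(r) \<sim> 1/r\<close>, so the integrand of \<open>h\<close> is
  \<open>O(r\<^sup>-\<^sup>1\<^sup>/\<^sup>2)\<close> uniformly in the path. Hence \<open>h(t, \<tau>, y)\<close> is bounded, continuous in \<open>\<tau>\<close> and
  H\<ouml>lder-1/2 in \<open>t\<close>, and the Picard map preserves continuity. The bound \<open>T \<le> b / (M1 + M2)\<close>
  keeps the ball invariant, and because \<open>\<integral>\<^sub>0\<^sup>T |C(z)| \<surd>(4Dz) dz < M\<close> the Lipschitz bounds make
  the map a strict contraction in the sup norm. Extending paths constantly outside \<open>[0, T]\<close>,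
  Banach's fixed point theorem in the space of bounded continuous functions gives existence
  and uniqueness.\<close>

section \<open>Integrals with an inverse square-root singularity\<close>

lemma sqrt_diff_le_sqrt_diff:
  fixes c d :: real
  assumes "0 \<le> c" "c \<le> d"
  shows "sqrt d - sqrt c \<le> sqrt (d - c)"
  using sqrt_add_le_add_sqrt[of c "d - c"] assms by simp

lemma has_integral_inverse_sqrt:
  fixes c d :: real
  assumes "0 \<le> c" "c \<le> d"
  shows "((\<lambda>r. 1 / sqrt r) has_integral (2 * sqrt d - 2 * sqrt c)) {c..d}"
proof (rule fundamental_theorem_of_calculus_interior[OF assms(2)])
  show "continuous_on {c..d} (\<lambda>r. 2 * sqrt r)"
    by (intro continuous_intros)
  show "((\<lambda>r. 2 * sqrt r) has_vector_derivative 1 / sqrt x) (at x)" if "x \<in> {c<..<d}" for x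
  proof -
    have "x > 0"
      using that assms by auto
    from DERIV_cmult[OF DERIV_real_sqrt[OF this], of 2] show ?thesis
      by (simp add: has_real_derivative_iff_has_vector_derivative[symmetric] field_simps)
  qed
qed

lemma continuous_on_Hoelder_half:
  fixes f :: "real \<Rightarrow> 'a::metric_space"
  assumes K: "0 \<le> K"
    and Hoelder: "\<And>x y. x \<in> S \<Longrightarrow> y \<in> S \<Longrightarrow> dist (f x) (f y) \<le> K * sqrt (dist x y)"
  shows "continuous_on S f"
  unfolding continuous_on_iff
proof (intro ballI allI impI)
  fix x e :: real
  assume x: "x \<in> S" and e: "0 < e"
  show "\<exists>d>0. \<forall>y\<in>S. dist y x < d \<longrightarrow> dist (f y) (f x) < e"
  proof (intro exI[of _ "(e / (K + 1))\<^sup>2"] conjI ballI impI)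
    show "0 < (e / (K + 1))\<^sup>2"
      using e K by simp
    fix y
    assume y: "y \<in> S" and "dist y x < (e / (K + 1))\<^sup>2"
    then have "sqrt (dist y x) < e / (K + 1)"
      using e K by (metis real_sqrt_less_mono real_sqrt_abs abs_of_pos divide_pos_pos add_nonneg_pos zero_less_one)
    then have "K * sqrt (dist y x) \<le> K * (e / (K + 1))"
      using K by (intro mult_left_mono) auto
    also have "\<dots> < e"
      using K e by (simp add: field_simps)
    finally show "dist (f y) (f x) < e"
      using Hoelder[OF y x] by linarith
  qed
qed

lemma norm_integral_le_const:
  fixes f :: "real \<Rightarrow> 'a::banach"
  assumes "f integrable_on {a..b}" "a \<le> b" "\<And>x. x \<in> {a..b} \<Longrightarrow> norm (f x) \<le> B"
  shows "norm (integral {a..b} f) \<le> (b - a) * B"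
  using integral_norm_bound_integral[OF assms(1) integrable_const_ivl, of B] assms by simp

lemma integrable_on_weakly_singular:
  fixes g :: "real \<Rightarrow> 'a::euclidean_space"
  assumes c: "0 \<le> c" and g: "continuous_on {0<..<c} g"
    and le: "\<And>r. r \<in> {0<..<c} \<Longrightarrow> norm (g r) \<le> K / sqrt r"
  shows "g integrable_on {0..c}"
proof -
  have "(\<lambda>r. K * (1 / sqrt r)) integrable_on {0..c}"
    using has_integral_mult_right[OF has_integral_inverse_sqrt[OF order_refl c], of K]
    by (rule has_integral_integrable)
  then have "(\<lambda>r. K / sqrt r) integrable_on {0..c}"
    by simp
  then have dom: "(\<lambda>r. K / sqrt r) integrable_on {0<..<c}"
    by (rule integrable_on_Icc_iff_Ioo[THEN iffD1])
  have meas: "g \<in> borel_measurable (lebesgue_on {0<..<c})"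
    by (rule continuous_imp_measurable_on_sets_lebesgue[OF g]) simp
  have "g integrable_on {0<..<c}"
    by (rule measurable_bounded_by_integrable_imp_integrable[OF meas dom le]) simp_all
  then show ?thesis
    by (rule integrable_on_Icc_iff_Ioo[THEN iffD2])
qed

text \<open>In the bounds \<open>K / sqrt r\<close> below, \<open>r = 0\<close> gives \<open>0\<close> (division by zero), so the
  integrand is also required to vanish there.\<close>

lemma norm_integral_le_weakly_singular:
  fixes g :: "real \<Rightarrow> 'a::banach"
  assumes K: "0 \<le> K" and cd: "0 \<le> c" "c \<le> d"
    and le: "\<And>r. r \<in> {c..d} \<Longrightarrow> norm (g r) \<le> K / sqrt r"
  shows "norm (integral {c..d} g) \<le> 2 * K * (sqrt d - sqrt c)"
proof (cases "g integrable_on {c..d}")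
  case True
  have bound: "((\<lambda>r. K * (1 / sqrt r)) has_integral K * (2 * sqrt d - 2 * sqrt c)) {c..d}"
    by (intro has_integral_mult_right has_integral_inverse_sqrt cd)
  have "norm (integral {c..d} g) \<le> integral {c..d} (\<lambda>r. K * (1 / sqrt r))"
    using integral_norm_bound_integral[OF True has_integral_integrable[OF bound]] le by simp
  also have "\<dots> = 2 * K * (sqrt d - sqrt c)"
    using integral_unique[OF bound] by (simp add: algebra_simps)
  finally show ?thesis .
next
  case False
  then show ?thesis
    using K cd by (simp add: not_integrable_integral)
qed

lemma continuous_on_integral_weakly_singular_param:
  fixes G :: "real \<Rightarrow> real \<Rightarrow> 'a::euclidean_space"
  assumes K: "0 \<le> K"
    and G_int: "\<And>\<tau>. \<tau> \<in> {0..t} \<Longrightarrow> G \<tau> integrable_on {0..t - \<tau>}"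
    and G_le: "\<And>\<tau> r. \<tau> \<in> {0..t} \<Longrightarrow> r \<in> {0..t} \<Longrightarrow> norm (G \<tau> r) \<le> K / sqrt r"
    and G_cont: "\<And>r. r \<in> {0..t} \<Longrightarrow> continuous_on {0..t} (\<lambda>\<tau>. G \<tau> r)"
  shows "continuous_on {0..t} (\<lambda>\<tau>. integral {0..t - \<tau>} (G \<tau>))"
proof (rule continuous_on_sequentiallyI)
  fix u \<tau>0
  assume u: "\<forall>n. u n \<in> {0..t}" and \<tau>0: "\<tau>0 \<in> {0..t}" and lim: "u \<longlonglongrightarrow> \<tau>0"
  define G' where "G' \<tau> = (\<lambda>r. if r \<in> {..t - \<tau>} then G \<tau> r else 0)" for \<tau>
  text \<open>The moving endpoint is absorbed into the integrand; the single point where the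
    truncations need not converge is removed from the domain.\<close>
  define S where "S = {0..t} - {t - \<tau>0}"
  have negl: "negligible (({0..t} - S) \<union> (S - {0..t}))"
    by (rule negligible_subset[of "{t - \<tau>0}"]) (auto simp: S_def)
  have restrict: "{..t - \<tau>} \<inter> {0..t} = {0..t - \<tau>}" if "\<tau> \<in> {0..t}" for \<tau>
    using that by auto
  have eq: "integral {0..t - \<tau>} (G \<tau>) = integral S (G' \<tau>)" if "\<tau> \<in> {0..t}" for \<tau>
  proof -
    have "integral {0..t - \<tau>} (G \<tau>) = integral {0..t} (G' \<tau>)"
      by (simp only: G'_def integral_restrict_Int restrict[OF that])
    also have "\<dots> = integral S (G' \<tau>)"
      by (rule integral_spike_set; rule negligible_subset[OF negl]) auto
    finally show ?thesis .
  qed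
  have int: "G' \<tau> integrable_on S" if "\<tau> \<in> {0..t}" for \<tau>
  proof -
    have "G' \<tau> integrable_on {0..t}"
      using G_int[OF that] by (simp only: G'_def integrable_restrict_Int restrict[OF that])
    then show ?thesis
      by (rule integrable_spike_set_eq[OF negl, THEN iffD1])
  qed
  have dom_int: "(\<lambda>r. K / sqrt r) integrable_on S"
  proof -
    have "(\<lambda>r. K / sqrt r) integrable_on {0..t}"
      using has_integral_mult_right[OF has_integral_inverse_sqrt[of 0 t], of K] \<tau>0
      by (auto simp: integrable_on_def)
    then show ?thesis
      by (rule integrable_spike_set_eq[OF negl, THEN iffD1])
  qed
  have dom: "norm (G' (u n) r) \<le> K / sqrt r" if "r \<in> S" for n r
    using that u G_le[of "u n" r] K by (auto simp: G'_def S_def)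
  have conv: "(\<lambda>n. G' (u n) r) \<longlonglongrightarrow> G' \<tau>0 r" if r: "r \<in> S" for r
  proof (cases "r < t - \<tau>0")
    case True
    have "continuous_on {0..t} (\<lambda>\<tau>. G \<tau> r)"
      using G_cont r by (simp add: S_def)
    then have "(\<lambda>n. G (u n) r) \<longlonglongrightarrow> G \<tau>0 r"
      using continuous_on_tendsto_compose[OF _ lim \<tau>0] u by simp
    moreover have "\<forall>\<^sub>F n in sequentially. u n < t - r"
      using order_tendstoD(2)[OF lim] True by simp
    then have "\<forall>\<^sub>F n in sequentially. G (u n) r = G' (u n) r"
      by eventually_elim (simp add: G'_def)
    ultimately have "(\<lambda>n. G' (u n) r) \<longlonglongrightarrow> G \<tau>0 r"
      by (rule Lim_transform_eventually)
    then show ?thesis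
      using True by (simp add: G'_def)
  next
    case False
    then have "r > t - \<tau>0"
      using r by (auto simp: S_def)
    then have "\<forall>\<^sub>F n in sequentially. u n > t - r"
      using order_tendstoD(1)[OF lim] by simp
    then have "\<forall>\<^sub>F n in sequentially. 0 = G' (u n) r"
      by eventually_elim (simp add: G'_def)
    then have "(\<lambda>n. G' (u n) r) \<longlonglongrightarrow> 0"
      by (rule Lim_transform_eventually[OF tendsto_const])
    then show ?thesis
      using \<open>r > t - \<tau>0\<close> by (simp add: G'_def)
  qed
  have "(\<lambda>n. integral S (G' (u n))) \<longlonglongrightarrow> integral S (G' \<tau>0)"
    by (rule dominated_convergence(2)[OF int[OF u[rule_format]] dom_int dom conv])
  then show "(\<lambda>n. integral {0..t - u n} (G (u n))) \<longlonglongrightarrow> integral {0..t - \<tau>0} (G \<tau>0)"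
    by (simp only: eq[OF u[rule_format]] eq[OF \<tau>0])
qed

lemma continuous_on_integral_Hoelder_param:
  fixes H :: "real \<Rightarrow> real \<Rightarrow> 'a::banach"
  assumes T0: "0 \<le> T0" and B: "0 \<le> B" and K: "0 \<le> K"
    and H_int: "\<And>t. t \<in> {0..T0} \<Longrightarrow> H t integrable_on {0..t}"
    and H_le: "\<And>t \<tau>. 0 \<le> \<tau> \<Longrightarrow> \<tau> \<le> t \<Longrightarrow> t \<le> T0 \<Longrightarrow> norm (H t \<tau>) \<le> B"
    and H_Hoelder: "\<And>t t' \<tau>. 0 \<le> \<tau> \<Longrightarrow> \<tau> \<le> t' \<Longrightarrow> t' \<le> t \<Longrightarrow> t \<le> T0 \<Longrightarrow>
      norm (H t \<tau> - H t' \<tau>) \<le> K * sqrt (t - t')"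
  shows "continuous_on {0..T0} (\<lambda>t. integral {0..t} (H t))"
proof (rule continuous_on_Hoelder_half)
  let ?J = "\<lambda>t. integral {0..t} (H t)"
  have Hoelder: "norm (?J t - ?J t') \<le> (T0 * K + B * sqrt T0) * sqrt (t - t')"
    if t': "0 \<le> t'" "t' \<le> t" and t: "t \<le> T0" for t t'
  proof -
    have int_t: "H t integrable_on {0..t}" and int_t': "H t' integrable_on {0..t'}"
      using H_int that by auto
    have int_t_0t': "H t integrable_on {0..t'}" and int_t_t't: "H t integrable_on {t'..t}"
      using integrable_subinterval_real[OF int_t] that by auto
    have "?J t = integral {0..t'} (H t) + integral {t'..t} (H t)"
      using Henstock_Kurzweil_Integration.integral_combine[OF _ _ int_t, of t'] that by simp
    then have "?J t - ?J t' = integral {0..t'} (\<lambda>\<tau>. H t \<tau> - H t' \<tau>) + integral {t'..t} (H t)"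
      by (simp add: integral_diff[OF int_t_0t' int_t'])
    then have "norm (?J t - ?J t') \<le>
        norm (integral {0..t'} (\<lambda>\<tau>. H t \<tau> - H t' \<tau>)) + norm (integral {t'..t} (H t))"
      by (simp add: norm_triangle_ineq)
    also have "\<dots> \<le> (t' - 0) * (K * sqrt (t - t')) + (t - t') * B"
      by (intro add_mono norm_integral_le_const integrable_diff int_t_0t' int_t' int_t_t't)
        (use that H_Hoelder H_le in auto)
    also have "\<dots> \<le> T0 * (K * sqrt (t - t')) + (sqrt T0 * sqrt (t - t')) * B"
    proof (intro add_mono mult_right_mono)
      have "t - t' = sqrt (t - t') * sqrt (t - t')"
        using that by simp
      also have "\<dots> \<le> sqrt T0 * sqrt (t - t')"
        using that by (intro mult_right_mono) auto
      finally show "t - t' \<le> sqrt T0 * sqrt (t - t')" .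
    qed (use that K B in auto)
    finally show ?thesis
      by (simp add: algebra_simps)
  qed
  show "0 \<le> T0 * K + B * sqrt T0"
    using T0 B K by simp
  show "dist (?J t) (?J t') \<le> (T0 * K + B * sqrt T0) * sqrt (dist t t')"
    if "t \<in> {0..T0}" "t' \<in> {0..T0}" for t t'
  proof (cases "t' \<le> t")
    case True
    then show ?thesis
      using Hoelder[of t' t] that by (simp add: dist_norm)
  next
    case False
    then show ?thesis
      using Hoelder[of t t'] that by (simp add: dist_norm norm_minus_commute abs_minus_commute)
  qed
qed

section \<open>Bounds on the chemotactic kernel\<close>

lemma exp_minus_le_inverse_one_plus:
  fixes x :: real
  assumes "0 \<le> x"
  shows "exp (- x) \<le> 1 / (1 + x)"
  using exp_ge_add_one_self[of x] assms by (simp add: exp_minus field_simps)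

lemma pker_abs_le:
  assumes D: "0 < D" and r: "0 < r" and R: "0 < R"
  shows "\<bar>pker D R r u v\<bar> \<le> pi * sqrt (4 * r * D)"
proof -
  define e where "e = 4 * r * D"
  have e: "0 < e"
    using D r by (simp add: e_def)
  define f where "f w = exp (- ((v - w)\<^sup>2) / e) *
      (exp (- ((u - sqrt (R\<^sup>2 - w\<^sup>2))\<^sup>2) / e) - exp (- ((u + sqrt (R\<^sup>2 - w\<^sup>2))\<^sup>2) / e))" for w
  text \<open>The Gaussian factor is dominated by the Cauchy kernel \<open>e / (e + (w - v)\<^sup>2)\<close>, whose
    integral over the real line is \<open>pi * sqrt e\<close>; the bracket lies in \<open>[-1, 1]\<close>.\<close>
  define g where "g w = e / (e + (w - v)\<^sup>2)" for w
  define G where "G w = sqrt e * arctan ((w - v) / sqrt e)" for w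
  have f_int: "f integrable_on {-R..R}"
    unfolding f_def using e by (intro integrable_continuous_interval continuous_intros) auto
  have "(G has_real_derivative g w) (at w)" for w
    unfolding G_def g_def using e by (auto intro!: derivative_eq_intros simp: power_divide field_simps)
  then have g_int: "(g has_integral (G R - G (-R))) {-R..R}"
    using R by (intro fundamental_theorem_of_calculus)
      (auto intro: DERIV_subset simp: has_real_derivative_iff_has_vector_derivative[symmetric])
  have f_le_g: "norm (f w) \<le> g w" for w
  proof -
    let ?a = "exp (- ((u - sqrt (R\<^sup>2 - w\<^sup>2))\<^sup>2) / e)" and ?b = "exp (- ((u + sqrt (R\<^sup>2 - w\<^sup>2))\<^sup>2) / e)"
    have "?a \<le> 1" "?b \<le> 1"
      using e by (simp_all add: divide_nonpos_pos)
    then have bracket: "\<bar>?a - ?b\<bar> \<le> 1"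
      using exp_gt_zero[of "- ((u - sqrt (R\<^sup>2 - w\<^sup>2))\<^sup>2) / e"]
        exp_gt_zero[of "- ((u + sqrt (R\<^sup>2 - w\<^sup>2))\<^sup>2) / e"]
      by linarith
    have "exp (- ((v - w)\<^sup>2) / e) = exp (- ((w - v)\<^sup>2 / e))"
      by (simp add: power2_commute)
    also have "\<dots> \<le> 1 / (1 + (w - v)\<^sup>2 / e)"
      using e by (intro exp_minus_le_inverse_one_plus) simp
    also have "\<dots> = g w"
      using e by (simp add: g_def field_simps)
    finally have gauss: "exp (- ((v - w)\<^sup>2) / e) \<le> g w" .
    have "norm (f w) = exp (- ((v - w)\<^sup>2) / e) * \<bar>?a - ?b\<bar>"
      by (simp add: f_def abs_mult)
    also have "\<dots> \<le> exp (- ((v - w)\<^sup>2) / e)"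
      using bracket by (simp add: mult_left_le)
    finally show ?thesis
      using gauss by simp
  qed
  have "\<bar>pker D R r u v\<bar> = norm (integral {-R..R} f)"
    by (simp add: pker_def f_def[abs_def] e_def)
  also have "\<dots> \<le> integral {-R..R} g"
    by (rule integral_norm_bound_integral[OF f_int has_integral_integrable[OF g_int] f_le_g])
  also have "\<dots> = sqrt e * (arctan ((R - v) / sqrt e) - arctan ((- R - v) / sqrt e))"
    using integral_unique[OF g_int] by (simp add: G_def right_diff_distrib)
  also have "\<dots> \<le> sqrt e * pi"
    using arctan_bounded[of "(R - v) / sqrt e"] arctan_bounded[of "(- R - v) / sqrt e"] e
    by (intro mult_left_mono) simp_all
  finally show ?thesis
    by (simp add: e_def mult.commute)
qed

lemma continuous_on_pker:
  assumes D: "0 < D" and cont: "continuous_on S r" "continuous_on S u" "continuous_on S v"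
    and r_pos: "\<And>x. x \<in> S \<Longrightarrow> 0 < r x"
  shows "continuous_on S (\<lambda>x. pker D R (r x) (u x) (v x))"
proof -
  have joint: "continuous_on ({0<..} \<times> UNIV) (\<lambda>(r, u, v). pker D R r u v)"
  proof -
    have "continuous_on ({0<..} \<times> (UNIV :: (real \<times> real) set)) (\<lambda>x. integral (cbox (- R) R)
        (\<lambda>w. exp (- ((snd (snd x) - w)\<^sup>2) / (4 * fst x * D)) *
          (exp (- ((fst (snd x) - sqrt (R\<^sup>2 - w\<^sup>2))\<^sup>2) / (4 * fst x * D))
           - exp (- ((fst (snd x) + sqrt (R\<^sup>2 - w\<^sup>2))\<^sup>2) / (4 * fst x * D)))))"
      by (rule integral_continuous_on_param)
        (use D in \<open>auto simp: split_beta intro!: continuous_intros\<close>)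
    then show ?thesis
      by (simp add: pker_def split_beta)
  qed
  have "continuous_on S ((\<lambda>(r, u, v). pker D R r u v) \<circ> (\<lambda>x. (r x, u x, v x)))"
    by (rule continuous_on_compose[OF _ continuous_on_subset[OF joint]])
      (use cont r_pos in \<open>auto intro!: continuous_intros\<close>)
  then show ?thesis
    by (simp add: o_def)
qed

lemma continuous_on_pfun:
  fixes y z :: "'a::topological_space \<Rightarrow> 'n::finite state"
  assumes D: "0 < D" and cont: "continuous_on S r" "continuous_on S y" "continuous_on S z"
    and r_pos: "\<And>x. x \<in> S \<Longrightarrow> 0 < r x"
  shows "continuous_on S (\<lambda>x. pfun D R (r x) (y x) (z x))"
  unfolding pfun_def
proof (intro continuous_on_Pair continuous_on_const continuous_on_vec_lambda)
  fix i k
  show "continuous_on S (\<lambda>x. if k = 1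
      then \<Sum>j\<in>UNIV. pker D R (r x) (snd (y x) $ i $ 1 - snd (z x) $ j $ 1) (snd (y x) $ i $ 2 - snd (z x) $ j $ 2)
      else \<Sum>j\<in>UNIV. pker D R (r x) (snd (y x) $ i $ 2 - snd (z x) $ j $ 2) (snd (y x) $ i $ 1 - snd (z x) $ j $ 1))"
    by (cases "k = 1")
      (simp_all, (intro continuous_on_sum continuous_on_pker[OF D] cont r_pos continuous_intros; simp)+)
qed

lemma norm_vec_le_sum_norm:
  fixes x :: "'a::real_normed_vector ^ 'm::finite"
  shows "norm x \<le> (\<Sum>i\<in>UNIV. norm (x $ i))"
  unfolding norm_vec_def by (rule L2_set_le_sum) simp

lemma norm_pfun_le:
  fixes y z :: "'n::finite state"
  assumes D: "0 < D" and r: "0 < r" and R: "0 < R"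
  shows "norm (pfun D R r y z) \<le> 2 * real CARD('n) ^ 2 * (pi * sqrt (4 * r * D))"
proof -
  let ?B = "pi * sqrt (4 * r * D)" and ?N = "real CARD('n)"
  have sum_le: "\<bar>\<Sum>j\<in>UNIV. pker D R r (f j) (g j)\<bar> \<le> ?N * ?B" for f g :: "'n \<Rightarrow> real"
  proof -
    have "\<bar>\<Sum>j\<in>UNIV. pker D R r (f j) (g j)\<bar> \<le> (\<Sum>j\<in>(UNIV::'n set). \<bar>pker D R r (f j) (g j)\<bar>)"
      by (rule sum_abs)
    also have "\<dots> \<le> (\<Sum>j\<in>(UNIV::'n set). ?B)"
      by (intro sum_mono pker_abs_le D r R)
    finally show ?thesis
      by simp
  qed
  define x where "x = fst (pfun D R r y z)"
  have "norm (x $ i) \<le> 2 * (?N * ?B)" for i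
  proof -
    have "norm (x $ i) \<le> (\<Sum>k\<in>UNIV. \<bar>x $ i $ k\<bar>)"
      by (rule norm_le_l1_cart)
    also have "\<dots> \<le> (\<Sum>k\<in>(UNIV::2 set). ?N * ?B)"
      by (intro sum_mono) (simp add: x_def pfun_def sum_le)
    finally show ?thesis
      by simp
  qed
  then have "norm x \<le> ?N * (2 * (?N * ?B))"
    using order_trans[OF norm_vec_le_sum_norm sum_mono[of UNIV "\<lambda>i. norm (x $ i)" "\<lambda>i. 2 * (?N * ?B)"]]
    by simp
  moreover have "norm (pfun D R r y z) = norm x"
    by (simp add: x_def pfun_def norm_Pair)
  ultimately show ?thesis
    by (simp add: power2_eq_square mult_ac)
qed

section \<open>The memory term\<close>

locale memory_kernel =
  fixes \<gamma> \<xi> \<eta> D R :: real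
  assumes kernel_pos: "0 < \<gamma>" "0 < \<xi>" "0 < \<eta>" "0 < D" "0 < R"
begin

abbreviation C :: "real \<Rightarrow> real" where
  "C \<equiv> Cfun \<gamma> \<xi> \<eta> D"

abbreviation h :: "real \<Rightarrow> real \<Rightarrow> (real \<Rightarrow> 'n::finite state) \<Rightarrow> 'n state" where
  "h \<equiv> hfun \<gamma> \<xi> \<eta> D R"

lemma C_nonneg: "0 \<le> r \<Longrightarrow> 0 \<le> C r"
  using kernel_pos by (simp add: Cfun_def)

lemma continuous_on_C: "continuous_on {0<..} C"
  unfolding Cfun_def using kernel_pos by (intro continuous_intros) auto

definition memory_integrand :: "(real \<Rightarrow> 'n::finite state) \<Rightarrow> real \<Rightarrow> real \<Rightarrow> 'n state" where
  "memory_integrand y \<tau> r = C r *\<^sub>R pfun D R r (y (r + \<tau>)) (y \<tau>)"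

definition singular_const :: "nat \<Rightarrow> real" where
  "singular_const N = \<gamma> * \<xi> * real N ^ 2 / sqrt D"

lemma singular_const_nonneg: "0 \<le> singular_const N"
  using kernel_pos by (simp add: singular_const_def)

lemma hfun_eq_integral_memory_integrand:
  "h t \<tau> y = integral {0..t - \<tau>} (memory_integrand y \<tau>)"
  using integral_shift_real_ivl[where f = "\<lambda>s. C (s - \<tau>) *\<^sub>R pfun D R (s - \<tau>) (y s) (y \<tau>)"
      and a = \<tau> and b = t and c = \<tau>]
  by (simp add: hfun_def memory_integrand_def[abs_def])

lemma norm_memory_integrand_le:
  fixes y :: "real \<Rightarrow> 'n::finite state"
  assumes "0 \<le> r"
  shows "norm (memory_integrand y \<tau> r) \<le> singular_const CARD('n) / sqrt r"
proof (cases "r = 0")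
  case True
  then show ?thesis
    by (simp add: memory_integrand_def Cfun_def)
next
  case False
  with assms have r: "0 < r"
    by simp
  have "norm (memory_integrand y \<tau> r) = C r * norm (pfun D R r (y (r + \<tau>)) (y \<tau>))"
    using C_nonneg[of r] r by (simp add: memory_integrand_def)
  also have "\<dots> \<le> C r * (2 * real CARD('n) ^ 2 * (pi * sqrt (4 * r * D)))"
    using C_nonneg[of r] r kernel_pos by (intro mult_left_mono norm_pfun_le) auto
  also have "\<dots> = exp (- \<eta> * r) * (singular_const CARD('n) / sqrt r)"
  proof -
    have "sqrt (4 * r * D) = 2 * sqrt D * sqrt r"
      by (simp add: real_sqrt_mult real_sqrt_four)
    moreover have "r = sqrt r * sqrt r" "D = sqrt D * sqrt D"
      using r kernel_pos by simp_all
    ultimately show ?thesis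
      using r kernel_pos unfolding singular_const_def Cfun_def by (simp add: field_simps)
  qed
  also have "\<dots> \<le> singular_const CARD('n) / sqrt r"
    using r kernel_pos singular_const_nonneg by (intro mult_left_le_one_le) auto
  finally show ?thesis .
qed

lemma continuous_on_memory_integrand:
  assumes y: "continuous_on UNIV y"
  shows "continuous_on {0<..} (memory_integrand y \<tau>)"
  unfolding memory_integrand_def[abs_def] using kernel_pos
  by (intro continuous_intros continuous_on_C continuous_on_pfun continuous_on_compose2[OF y]) auto

lemma continuous_on_memory_integrand_param:
  assumes y: "continuous_on UNIV y" and r: "0 \<le> r"
  shows "continuous_on S (\<lambda>\<tau>. memory_integrand y \<tau> r)"
proof (cases "r = 0")
  case True
  then show ?thesis
    by (simp add: memory_integrand_def Cfun_def)
next
  case False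
  with r show ?thesis
    unfolding memory_integrand_def using kernel_pos
    by (intro continuous_intros continuous_on_pfun continuous_on_compose2[OF y]) auto
qed

lemma integrable_memory_integrand:
  assumes y: "continuous_on UNIV y" and c: "0 \<le> c"
  shows "memory_integrand y \<tau> integrable_on {0..c}"
  by (rule integrable_on_weakly_singular[OF c continuous_on_subset[OF continuous_on_memory_integrand[OF y]]])
    (auto intro: norm_memory_integrand_le)

lemma norm_hfun_le:
  fixes y :: "real \<Rightarrow> 'n::finite state"
  assumes "0 \<le> \<tau>" "\<tau> \<le> t"
  shows "norm (h t \<tau> y) \<le> 2 * singular_const CARD('n) * sqrt (t - \<tau>)"
  unfolding hfun_eq_integral_memory_integrand
  using norm_integral_le_weakly_singular[OF singular_const_nonneg, of 0 "t - \<tau>" "memory_integrand y \<tau>"]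
    norm_memory_integrand_le[of _ y \<tau>] assms
  by simp

lemma norm_hfun_diff_le:
  fixes y :: "real \<Rightarrow> 'n::finite state"
  assumes y: "continuous_on UNIV y" and "0 \<le> \<tau>" "\<tau> \<le> t'" "t' \<le> t"
  shows "norm (h t \<tau> y - h t' \<tau> y)
    \<le> 2 * singular_const CARD('n) * sqrt (t - t')"
proof -
  let ?K = "singular_const CARD('n)"
  have int: "memory_integrand y \<tau> integrable_on {0..t - \<tau>}"
    using integrable_memory_integrand[OF y] assms by simp
  have "integral {0..t' - \<tau>} (memory_integrand y \<tau>) + integral {t' - \<tau>..t - \<tau>} (memory_integrand y \<tau>)
      = integral {0..t - \<tau>} (memory_integrand y \<tau>)"
    using Henstock_Kurzweil_Integration.integral_combine[OF _ _ int, of "t' - \<tau>"] assms by simp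
  then have "norm (h t \<tau> y - h t' \<tau> y)
      = norm (integral {t' - \<tau>..t - \<tau>} (memory_integrand y \<tau>))"
    unfolding hfun_eq_integral_memory_integrand by (metis add_diff_cancel_left')
  also have "\<dots> \<le> 2 * ?K * (sqrt (t - \<tau>) - sqrt (t' - \<tau>))"
    using norm_integral_le_weakly_singular[OF singular_const_nonneg, of "t' - \<tau>" "t - \<tau>" "memory_integrand y \<tau>"]
      norm_memory_integrand_le[of _ y \<tau>] assms
    by simp
  also have "\<dots> \<le> 2 * ?K * sqrt (t - t')"
    using sqrt_diff_le_sqrt_diff[of "t' - \<tau>" "t - \<tau>"] assms singular_const_nonneg
    by (intro mult_left_mono) auto
  finally show ?thesis .
qed

lemma continuous_on_hfun:
  assumes y: "continuous_on UNIV y"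
  shows "continuous_on {0..t} (\<lambda>\<tau>. h t \<tau> y)"
  unfolding hfun_eq_integral_memory_integrand
  by (rule continuous_on_integral_weakly_singular_param[OF singular_const_nonneg])
    (auto intro: integrable_memory_integrand[OF y] norm_memory_integrand_le
      continuous_on_memory_integrand_param[OF y])

lemma continuous_on_integral_hfun:
  fixes y :: "real \<Rightarrow> 'n::finite state"
  assumes y: "continuous_on UNIV y" and T0: "0 \<le> T0"
  shows "continuous_on {0..T0} (\<lambda>t. integral {0..t} (\<lambda>\<tau>. h t \<tau> y))"
proof (rule continuous_on_integral_Hoelder_param[OF T0 _ _ _ _ norm_hfun_diff_le[OF y]])
  let ?K = "singular_const CARD('n)"
  show "0 \<le> 2 * ?K * sqrt T0" "0 \<le> 2 * ?K"
    using singular_const_nonneg T0 by simp_all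
  show "(\<lambda>\<tau>. h t \<tau> y) integrable_on {0..t}" for t
    by (rule integrable_continuous_interval[OF continuous_on_hfun[OF y]])
  show "norm (h t \<tau> y) \<le> 2 * ?K * sqrt T0" if "0 \<le> \<tau>" "\<tau> \<le> t" "t \<le> T0" for t \<tau>
    using that singular_const_nonneg
    by (intro order_trans[OF norm_hfun_le[OF that(1,2)]] mult_left_mono) auto
qed

definition weight :: "real \<Rightarrow> real" where
  "weight z = \<bar>C z\<bar> * sqrt (4 * D * z)"

definition weight_const :: real where
  "weight_const = \<gamma> * \<xi> / (2 * pi * sqrt D)"

lemma weight_const_pos: "0 < weight_const"
  using kernel_pos by (simp add: weight_const_def)

lemma weight_eq:
  assumes "0 < z"
  shows "weight z = weight_const * exp (- \<eta> * z) / sqrt z"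
proof -
  have "sqrt (4 * D * z) = 2 * sqrt D * sqrt z"
    by (simp add: real_sqrt_mult real_sqrt_four)
  moreover have "z = sqrt z * sqrt z" "D = sqrt D * sqrt D"
    using assms kernel_pos by simp_all
  ultimately show ?thesis
    using assms kernel_pos C_nonneg[of z] unfolding weight_def weight_const_def Cfun_def
    by (simp add: field_simps)
qed

lemma weight_nonneg: "0 \<le> z \<Longrightarrow> 0 \<le> weight z"
  using kernel_pos by (simp add: weight_def)

lemma weight_pos: "0 < z \<Longrightarrow> 0 < weight z"
  using weight_const_pos by (simp add: weight_eq)

lemma weight_antimono:
  assumes "0 < x" "x \<le> y"
  shows "weight y \<le> weight x"
proof -
  have "exp (- \<eta> * y) * (1 / sqrt y) \<le> exp (- \<eta> * x) * (1 / sqrt x)"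
    using assms kernel_pos by (intro mult_mono) (auto simp: frac_le)
  then have "weight_const * (exp (- \<eta> * y) / sqrt y) \<le> weight_const * (exp (- \<eta> * x) / sqrt x)"
    using weight_const_pos by (intro mult_left_mono) simp_all
  then show ?thesis
    using assms by (simp add: weight_eq)
qed

lemma integrable_weight: "0 \<le> c \<Longrightarrow> weight integrable_on {0..c}"
proof (rule integrable_on_weakly_singular)
  show "continuous_on {0<..<c} weight"
    unfolding weight_def[abs_def] by (intro continuous_intros continuous_on_subset[OF continuous_on_C]) auto
  show "norm (weight r) \<le> weight_const / sqrt r" if "r \<in> {0<..<c}" for r
    using that weight_const_pos weight_nonneg[of r] kernel_pos
    by (simp add: weight_eq divide_right_mono)
qed

lemma integral_weight_nonneg: "0 \<le> c \<Longrightarrow> 0 \<le> integral {0..c} weight"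
  by (rule integral_nonneg[OF integrable_weight]) (auto simp: weight_nonneg)

lemma integrable_weight_nonneg_reals: "weight integrable_on {0..}"
proof -
  have exp_int: "(\<lambda>z. weight_const * exp (- \<eta> * z)) integrable_on {1..}"
    using integrable_on_cmult_left[OF integrable_on_exp_minus_to_infinity[of \<eta> 1]] kernel_pos by simp
  have "continuous_on {1..} weight"
    unfolding weight_def[abs_def]
    by (intro continuous_intros continuous_on_subset[OF continuous_on_C]) auto
  then have meas: "weight \<in> borel_measurable (lebesgue_on {1..})"
    by (rule continuous_imp_measurable_on_sets_lebesgue) simp
  have tail: "weight integrable_on {1..}"
  proof (rule measurable_bounded_by_integrable_imp_integrable[OF meas exp_int])
    show "norm (weight z) \<le> weight_const * exp (- \<eta> * z)" if "z \<in> {1..}" for z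
    proof -
      have z: "0 < z"
        using that by simp
      have "norm (weight z) = weight z"
        using weight_nonneg[of z] z by simp
      also have "\<dots> = weight_const * exp (- \<eta> * z) / sqrt z"
        by (rule weight_eq[OF z])
      also have "\<dots> \<le> weight_const * exp (- \<eta> * z) / 1"
        using that weight_const_pos by (intro divide_left_mono) auto
      finally show ?thesis
        by simp
    qed
  qed simp
  have "weight integrable_on {0..1}"
    by (rule integrable_weight) simp
  moreover have "{0..1} \<inter> {1..} = {1 :: real}" "{0..} = {0..1} \<union> {1 :: real..}"
    by auto
  ultimately show ?thesis
    using tail integrable_Un[of "{0..1}" "{1..}" weight] by simp
qed

lemma integral_weight_less:
  assumes T0: "0 < T0"
  shows "integral {0..T0} weight < integral {0..} weight"
proof -
  have "0 < weight (T0 + 1)"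
    using T0 by (intro weight_pos) simp
  also have "\<dots> = integral {T0..T0 + 1} (\<lambda>_. weight (T0 + 1))"
    by simp
  also have "\<dots> \<le> integral {T0..T0 + 1} weight"
    using T0 integrable_subinterval_real[OF integrable_weight[of "T0 + 1"]]
    by (intro integral_le) (auto intro: weight_antimono)
  finally have "integral {0..T0} weight < integral {0..T0} weight + integral {T0..T0 + 1} weight"
    by simp
  also have "\<dots> = integral {0..T0 + 1} weight"
    using Henstock_Kurzweil_Integration.integral_combine[OF _ _ integrable_weight, of T0] T0 by simp
  also have "\<dots> \<le> integral {0..} weight"
    using T0 by (intro integral_subset_le integrable_weight integrable_weight_nonneg_reals)
      (auto simp: weight_nonneg)
  finally show ?thesis .
qed

end

section \<open>The Picard map\<close>

locale local_wellposedness = memory_kernel \<gamma> \<xi> \<eta> D R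
  for \<gamma> \<xi> \<eta> D R :: real +
  fixes \<beta> \<sigma> a b L1 L2 :: real
    and y0 :: "'n::finite state"
    and M1 M2 M T :: real
  assumes a_pos: "0 < a" and b_pos: "0 < b"
    and q_Lipschitz: "L1-lipschitz_on (cball y0 b) (qfun \<beta> \<sigma> R)"
    and L2_pos: "0 < L2"
    and p_Lipschitz: "\<And>r u1 u2 v1 v2. 0 < r \<Longrightarrow> r \<le> a \<Longrightarrow>
      u1 \<in> cball y0 b \<Longrightarrow> u2 \<in> cball y0 b \<Longrightarrow> v1 \<in> cball y0 b \<Longrightarrow> v2 \<in> cball y0 b \<Longrightarrow>
      norm (pfun D R r u1 v1 - pfun D R r u2 v2) \<le> sqrt (4 * D * r) * L2 * (norm (u1 - u2) + norm (v1 - v2))"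
    and M1_def: "M1 = Sup ((\<lambda>u. norm (qfun \<beta> \<sigma> R u)) ` cball y0 b)"
    and M2_def: "M2 = Sup {norm (hfun \<gamma> \<xi> \<eta> D R t \<tau> y) | t \<tau> (y :: real \<Rightarrow> 'n state).
                   0 \<le> \<tau> \<and> \<tau> \<le> t \<and> t \<le> a \<and> continuous_on {0..a} y \<and>
                   (\<forall>s\<in>{0..a}. norm (y s - y0) \<le> b)}"
    and M_def: "M = integral {0..} weight"
    and T_def: "T = min a (min (b / (M1 + M2)) (1 / (L1 + 2 * L2 * M)))"
begin

abbreviation q :: "'n state \<Rightarrow> 'n state" where
  "q \<equiv> qfun \<beta> \<sigma> R"

lemma L1_nonneg: "0 \<le> L1"
  using q_Lipschitz by (rule lipschitz_on_nonneg)

lemma norm_q_diff_le: "u \<in> cball y0 b \<Longrightarrow> v \<in> cball y0 b \<Longrightarrow> norm (q u - q v) \<le> L1 * norm (u - v)"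
  using lipschitz_onD[OF q_Lipschitz] by (simp add: dist_norm)

lemma continuous_on_q: "continuous_on (cball y0 b) q"
  by (rule lipschitz_on_continuous_on[OF q_Lipschitz])

lemma norm_q_le_M1:
  assumes "u \<in> cball y0 b"
  shows "norm (q u) \<le> M1"
proof -
  have "norm (q v) \<le> norm (q y0) + L1 * b" if "v \<in> cball y0 b" for v
  proof -
    have "norm (q v) \<le> norm (q y0) + norm (q v - q y0)"
      by (rule norm_triangle_sub)
    also have "norm (q v - q y0) \<le> L1 * norm (v - y0)"
      using that b_pos by (intro norm_q_diff_le) auto
    also have "\<dots> \<le> L1 * b"
      using that L1_nonneg by (intro mult_left_mono) (auto simp: dist_norm norm_minus_commute)
    finally show ?thesis
      by simp
  qed
  then show ?thesis
    unfolding M1_def using assms by (intro cSup_upper bdd_aboveI2) auto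
qed

lemma M1_nonneg: "0 \<le> M1"
  using b_pos order_trans[OF norm_ge_zero norm_q_le_M1[of y0]] by simp

lemma norm_hfun_le_M2:
  assumes "0 \<le> \<tau>" "\<tau> \<le> t" "t \<le> a" "continuous_on {0..a} y" "\<forall>s\<in>{0..a}. norm (y s - y0) \<le> b"
  shows "norm (h t \<tau> y) \<le> M2"
  unfolding M2_def
proof (rule cSup_upper)
  show "bdd_above {norm (h t \<tau> y) | t \<tau> (y :: real \<Rightarrow> 'n state).
      0 \<le> \<tau> \<and> \<tau> \<le> t \<and> t \<le> a \<and> continuous_on {0..a} y \<and> (\<forall>s\<in>{0..a}. norm (y s - y0) \<le> b)}"
  proof (rule bdd_aboveI, safe)
    fix t \<tau> and y :: "real \<Rightarrow> 'n state"
    assume "0 \<le> \<tau>" "\<tau> \<le> t" "t \<le> a"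
    then have "norm (h t \<tau> y) \<le> 2 * singular_const CARD('n) * sqrt (t - \<tau>)"
      by (intro norm_hfun_le)
    also have "\<dots> \<le> 2 * singular_const CARD('n) * sqrt a"
      using \<open>0 \<le> \<tau>\<close> \<open>t \<le> a\<close> singular_const_nonneg by (intro mult_left_mono) auto
    finally show "norm (h t \<tau> y) \<le> 2 * singular_const CARD('n) * sqrt a" .
  qed
qed (use assms in blast)

lemma M2_nonneg: "0 \<le> M2"
  using a_pos b_pos order_trans[OF norm_ge_zero norm_hfun_le_M2[of 0 0 "\<lambda>_. y0"]] by simp

lemma M_nonneg: "0 \<le> M"
  unfolding M_def by (rule integral_nonneg[OF integrable_weight_nonneg_reals]) (simp add: weight_nonneg)

lemma T_nonneg: "0 \<le> T"
  unfolding T_def using a_pos b_pos M1_nonneg M2_nonneg L1_nonneg L2_pos M_nonneg by simp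

lemma T_le_a: "T \<le> a"
  unfolding T_def by simp

lemma T_mult_le_b: "T * (M1 + M2) \<le> b"
proof (cases "M1 + M2 = 0")
  case True
  then show ?thesis
    using b_pos by simp
next
  case False
  then have "0 < M1 + M2"
    using M1_nonneg M2_nonneg by simp
  moreover have "T \<le> b / (M1 + M2)"
    unfolding T_def by simp
  ultimately show ?thesis
    by (simp add: le_divide_eq)
qed

definition contraction_const :: real where
  "contraction_const = T * (L1 + 2 * L2 * integral {0..T} weight)"

lemma contraction_const_nonneg: "0 \<le> contraction_const"
  unfolding contraction_const_def
  using T_nonneg L1_nonneg L2_pos integral_weight_nonneg[OF T_nonneg] by simp

text \<open>Strictness comes from \<open>integral {0..T} weight < M\<close>, which is where \<open>L2 > 0\<close> is
  needed: \<open>T \<le> 1 / (L1 + 2 * L2 * M)\<close> alone only gives \<open>contraction_const \<le> 1\<close>.\<close>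

lemma contraction_const_less_one: "contraction_const < 1"
proof (cases "T = 0")
  case True
  then show ?thesis
    unfolding contraction_const_def by simp
next
  case False
  then have T: "0 < T"
    using T_nonneg by simp
  have "contraction_const < T * (L1 + 2 * L2 * M)"
    unfolding contraction_const_def M_def using T L2_pos integral_weight_less[OF T] by simp
  moreover have "T * (L1 + 2 * L2 * M) \<le> 1"
  proof (cases "L1 + 2 * L2 * M = 0")
    case False
    moreover have "0 \<le> L1 + 2 * L2 * M"
      using L1_nonneg L2_pos M_nonneg by simp
    ultimately have "0 < L1 + 2 * L2 * M"
      by simp
    moreover have "T \<le> 1 / (L1 + 2 * L2 * M)"
      unfolding T_def by simp
    ultimately show ?thesis
      by (simp add: le_divide_eq mult.commute)
  qed simp
  ultimately show ?thesis
    by simp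
qed

definition picard :: "(real \<Rightarrow> 'n state) \<Rightarrow> real \<Rightarrow> 'n state" where
  "picard y t = y0 + integral {0..t} (\<lambda>\<tau>. q (y \<tau>) + h t \<tau> y)"

lemma integrable_picard_integrand:
  assumes y: "continuous_on UNIV y" and y_ball: "\<And>s. y s \<in> cball y0 b"
  shows "(\<lambda>\<tau>. q (y \<tau>) + h t \<tau> y) integrable_on {0..t}"
  using y_ball
  by (intro integrable_add integrable_continuous_interval continuous_on_hfun[OF y]
      continuous_on_compose2[OF continuous_on_q continuous_on_subset[OF y]]) auto

lemma continuous_on_picard:
  assumes y: "continuous_on UNIV y" and y_ball: "\<And>s. y s \<in> cball y0 b"
  shows "continuous_on {0..T} (picard y)"
proof -
  have q_int: "(\<lambda>\<tau>. q (y \<tau>)) integrable_on {0..t}" for t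
    using y_ball by (intro integrable_continuous_interval
        continuous_on_compose2[OF continuous_on_q continuous_on_subset[OF y]]) auto
  have "picard y = (\<lambda>t. y0 + (integral {0..t} (\<lambda>\<tau>. q (y \<tau>)) + integral {0..t} (\<lambda>\<tau>. h t \<tau> y)))"
    unfolding picard_def
    by (subst integral_add[OF q_int integrable_continuous_interval[OF continuous_on_hfun[OF y]]]) simp
  then show ?thesis
    by (simp only:) (intro continuous_intros indefinite_integral_continuous_1[OF q_int]
        continuous_on_integral_hfun[OF y T_nonneg])
qed

lemma picard_in_cball:
  assumes y: "continuous_on UNIV y" and y_ball: "\<And>s. y s \<in> cball y0 b" and t: "t \<in> {0..T}"
  shows "picard y t \<in> cball y0 b"
proof -
  have "norm (integral {0..t} (\<lambda>\<tau>. q (y \<tau>) + h t \<tau> y)) \<le> (t - 0) * (M1 + M2)"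
  proof (rule norm_integral_le_const[OF integrable_picard_integrand[OF y y_ball]])
    fix \<tau>
    assume \<tau>: "\<tau> \<in> {0..t}"
    have "norm (q (y \<tau>) + h t \<tau> y) \<le> norm (q (y \<tau>)) + norm (h t \<tau> y)"
      by (rule norm_triangle_ineq)
    also have "\<dots> \<le> M1 + M2"
    proof (rule add_mono)
      show "norm (q (y \<tau>)) \<le> M1"
        by (rule norm_q_le_M1[OF y_ball])
      show "norm (h t \<tau> y) \<le> M2"
        using \<tau> t T_le_a y_ball continuous_on_subset[OF y]
        by (intro norm_hfun_le_M2) (auto simp: dist_norm norm_minus_commute)
    qed
    finally show "norm (q (y \<tau>) + h t \<tau> y) \<le> M1 + M2" .
  qed (use t in auto)
  also have "\<dots> \<le> T * (M1 + M2)"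
    using t M1_nonneg M2_nonneg by (intro mult_right_mono) auto
  also have "\<dots> \<le> b"
    by (rule T_mult_le_b)
  finally show ?thesis
    by (simp add: picard_def dist_norm)
qed

lemma norm_memory_integrand_diff_le:
  assumes ball: "\<And>s. y1 s \<in> cball y0 b" "\<And>s. y2 s \<in> cball y0 b"
    and d: "\<And>s. norm (y1 s - y2 s) \<le> d" and r: "0 \<le> r" "r \<le> a"
  shows "norm (memory_integrand y1 \<tau> r - memory_integrand y2 \<tau> r) \<le> 2 * L2 * d * weight r"
proof (cases "r = 0")
  case True
  then show ?thesis
    by (simp add: memory_integrand_def weight_def Cfun_def)
next
  case False
  with r have r_pos: "0 < r"
    by simp
  have "norm (memory_integrand y1 \<tau> r - memory_integrand y2 \<tau> r)
      = C r * norm (pfun D R r (y1 (r + \<tau>)) (y1 \<tau>) - pfun D R r (y2 (r + \<tau>)) (y2 \<tau>))"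
    using C_nonneg[OF r(1)] by (simp add: memory_integrand_def flip: scaleR_diff_right)
  also have "\<dots> \<le> C r * (sqrt (4 * D * r) * L2 * (norm (y1 (r + \<tau>) - y2 (r + \<tau>)) + norm (y1 \<tau> - y2 \<tau>)))"
    using C_nonneg[OF r(1)] r_pos r ball by (intro mult_left_mono p_Lipschitz) auto
  also have "\<dots> \<le> C r * (sqrt (4 * D * r) * L2 * (2 * d))"
    using C_nonneg[OF r(1)] L2_pos d[of "r + \<tau>"] d[of \<tau>] r kernel_pos
    by (intro mult_left_mono) auto
  also have "\<dots> = 2 * L2 * d * weight r"
    using C_nonneg[OF r(1)] by (simp add: weight_def)
  finally show ?thesis .
qed

lemma norm_hfun_diff_le_uniform:
  assumes y1: "continuous_on UNIV y1" and y2: "continuous_on UNIV y2"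
    and ball: "\<And>s. y1 s \<in> cball y0 b" "\<And>s. y2 s \<in> cball y0 b"
    and d: "\<And>s. norm (y1 s - y2 s) \<le> d" and "0 \<le> \<tau>" "\<tau> \<le> t" "t \<le> T"
  shows "norm (h t \<tau> y1 - h t \<tau> y2) \<le> 2 * L2 * d * integral {0..T} weight"
proof -
  have d_nonneg: "0 \<le> d"
    using order_trans[OF norm_ge_zero d] .
  have c: "0 \<le> t - \<tau>"
    using assms by simp
  have "norm (h t \<tau> y1 - h t \<tau> y2)
      = norm (integral {0..t - \<tau>} (\<lambda>r. memory_integrand y1 \<tau> r - memory_integrand y2 \<tau> r))"
    unfolding hfun_eq_integral_memory_integrand
    using integral_diff[OF integrable_memory_integrand[OF y1 c] integrable_memory_integrand[OF y2 c]]
    by simp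
  also have "\<dots> \<le> integral {0..t - \<tau>} (\<lambda>r. 2 * L2 * d * weight r)"
  proof (rule integral_norm_bound_integral)
    show "(\<lambda>r. memory_integrand y1 \<tau> r - memory_integrand y2 \<tau> r) integrable_on {0..t - \<tau>}"
      by (intro integrable_diff integrable_memory_integrand y1 y2 c)
    show "(\<lambda>r. 2 * L2 * d * weight r) integrable_on {0..t - \<tau>}"
      using integrable_on_cmult_left[OF integrable_weight[OF c], of "2 * L2 * d"] by simp
    show "norm (memory_integrand y1 \<tau> r - memory_integrand y2 \<tau> r) \<le> 2 * L2 * d * weight r"
      if "r \<in> {0..t - \<tau>}" for r
      by (rule norm_memory_integrand_diff_le[OF ball d]) (use that assms T_le_a in auto)
  qed
  also have "\<dots> = 2 * L2 * d * integral {0..t - \<tau>} weight"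
    by simp
  also have "\<dots> \<le> 2 * L2 * d * integral {0..T} weight"
  proof -
    have "integral {0..t - \<tau>} weight \<le> integral {0..T} weight"
      using assms integrable_weight[OF c] integrable_weight[OF T_nonneg]
      by (intro integral_subset_le) (auto simp: weight_nonneg)
    then show ?thesis
      using d_nonneg L2_pos by (intro mult_left_mono) auto
  qed
  finally show ?thesis .
qed

lemma norm_picard_diff_le:
  assumes y1: "continuous_on UNIV y1" and y2: "continuous_on UNIV y2"
    and ball: "\<And>s. y1 s \<in> cball y0 b" "\<And>s. y2 s \<in> cball y0 b"
    and d: "\<And>s. norm (y1 s - y2 s) \<le> d" and t: "t \<in> {0..T}"
  shows "norm (picard y1 t - picard y2 t) \<le> contraction_const * d"
proof -
  let ?I = "integral {0..T} weight"
  have "norm (picard y1 t - picard y2 t)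
      = norm (integral {0..t} (\<lambda>\<tau>. (q (y1 \<tau>) - q (y2 \<tau>)) + (h t \<tau> y1 - h t \<tau> y2)))"
    unfolding picard_def
    by (simp add: integral_diff[OF integrable_picard_integrand[OF y1 ball(1)]
          integrable_picard_integrand[OF y2 ball(2)], symmetric] algebra_simps)
  also have "\<dots> \<le> (t - 0) * (L1 * d + 2 * L2 * d * ?I)"
  proof (rule norm_integral_le_const)
    show "(\<lambda>\<tau>. (q (y1 \<tau>) - q (y2 \<tau>)) + (h t \<tau> y1 - h t \<tau> y2)) integrable_on {0..t}"
      using integrable_diff[OF integrable_picard_integrand[OF y1 ball(1)]
          integrable_picard_integrand[OF y2 ball(2)]]
      by (simp add: algebra_simps)
    fix \<tau>
    assume \<tau>: "\<tau> \<in> {0..t}"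
    have "norm (q (y1 \<tau>) - q (y2 \<tau>)) \<le> L1 * d"
      using norm_q_diff_le[OF ball(1) ball(2)] mult_left_mono[OF d L1_nonneg] by (rule order_trans)
    moreover have "norm (h t \<tau> y1 - h t \<tau> y2) \<le> 2 * L2 * d * ?I"
      using \<tau> t by (intro norm_hfun_diff_le_uniform[OF y1 y2 ball d]) auto
    ultimately show "norm ((q (y1 \<tau>) - q (y2 \<tau>)) + (h t \<tau> y1 - h t \<tau> y2)) \<le> L1 * d + 2 * L2 * d * ?I"
      by (rule order_trans[OF norm_triangle_ineq add_mono])
  qed (use t in auto)
  also have "\<dots> \<le> T * (L1 * d + 2 * L2 * d * ?I)"
    using t L1_nonneg L2_pos order_trans[OF norm_ge_zero d] integral_weight_nonneg[OF T_nonneg]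
    by (intro mult_right_mono) auto
  also have "\<dots> = contraction_const * d"
    by (simp add: contraction_const_def algebra_simps)
  finally show ?thesis .
qed

lemma picard_cong:
  assumes "\<And>s. s \<in> {0..t} \<Longrightarrow> y s = z s"
  shows "picard y t = picard z t"
proof -
  have "h t \<tau> y = h t \<tau> z" if "\<tau> \<in> {0..t}" for \<tau>
    unfolding hfun_def using that assms by (intro integral_cong) auto
  then show ?thesis
    unfolding picard_def using assms by (intro arg_cong[where f = "(+) y0"] integral_cong) auto
qed

section \<open>The fixed point\<close>

text \<open>Functions on \<open>[0, T]\<close> are extended to \<open>\<real>\<close> by constants, so that the Picard map acts
  on the complete space of bounded continuous functions.\<close>

definition clamp :: "real \<Rightarrow> real" where
  "clamp t = max 0 (min T t)"

lemma clamp_in: "clamp t \<in> {0..T}"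
  using T_nonneg by (auto simp: clamp_def)

lemma clamp_id: "t \<in> {0..T} \<Longrightarrow> clamp t = t"
  by (auto simp: clamp_def)

lemma continuous_on_clamp: "continuous_on S clamp"
  unfolding clamp_def by (intro continuous_intros)

lemma clamp_extension_in_bcontfun:
  assumes y: "continuous_on {0..T} y" and y_ball: "\<And>t. t \<in> {0..T} \<Longrightarrow> y t \<in> cball y0 b"
  shows "(\<lambda>t. y (clamp t)) \<in> bcontfun"
proof (rule bcontfun_normI)
  show "continuous_on UNIV (\<lambda>t. y (clamp t))"
    using clamp_in by (intro continuous_on_compose2[OF y continuous_on_clamp]) auto
  show "norm (y (clamp t)) \<le> norm y0 + b" for t
  proof -
    have "norm (y (clamp t) - y0) \<le> b"
      using y_ball[OF clamp_in] by (simp add: dist_norm norm_minus_commute)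
    then show ?thesis
      using norm_triangle_sub[of "y (clamp t)" y0] by linarith
  qed
qed

abbreviation ball_paths :: "(real \<Rightarrow>\<^sub>C 'n state) set" where
  "ball_paths \<equiv> PiC UNIV (\<lambda>_. cball y0 b)"

lemma mem_ball_paths: "f \<in> ball_paths \<longleftrightarrow> (\<forall>t. apply_bcontfun f t \<in> cball y0 b)"
  by (simp add: mem_PiC_iff Pi_iff)

definition picard_bcont :: "(real \<Rightarrow>\<^sub>C 'n state) \<Rightarrow> (real \<Rightarrow>\<^sub>C 'n state)" where
  "picard_bcont f = Bcontfun (\<lambda>t. picard (apply_bcontfun f) (clamp t))"

lemma apply_picard_bcont:
  assumes "f \<in> ball_paths"
  shows "apply_bcontfun (picard_bcont f) t = picard (apply_bcontfun f) (clamp t)"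
proof -
  have "(\<lambda>t. picard (apply_bcontfun f) (clamp t)) \<in> bcontfun"
    using assms by (intro clamp_extension_in_bcontfun continuous_on_picard picard_in_cball)
      (auto simp: mem_ball_paths)
  then show ?thesis
    by (simp add: picard_bcont_def Bcontfun_inverse)
qed

lemma picard_bcont_in_ball_paths:
  assumes "f \<in> ball_paths"
  shows "picard_bcont f \<in> ball_paths"
  unfolding mem_ball_paths apply_picard_bcont[OF assms]
  using assms by (intro allI picard_in_cball clamp_in) (auto simp: mem_ball_paths simp del: mem_cball)

lemma dist_picard_bcont_le:
  assumes f: "f \<in> ball_paths" and g: "g \<in> ball_paths"
  shows "dist (picard_bcont f) (picard_bcont g) \<le> contraction_const * dist f g"
proof (rule dist_bound)
  fix t
  have "norm (picard (apply_bcontfun f) (clamp t) - picard (apply_bcontfun g) (clamp t))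
      \<le> contraction_const * dist f g"
    using f g dist_bounded[of f _ g]
    by (intro norm_picard_diff_le clamp_in) (auto simp: mem_ball_paths dist_norm)
  then show "dist (apply_bcontfun (picard_bcont f) t) (apply_bcontfun (picard_bcont g) t)
      \<le> contraction_const * dist f g"
    by (simp add: apply_picard_bcont f g dist_norm)
qed

lemma ex1_fixpoint_picard_bcont: "\<exists>!f \<in> ball_paths. picard_bcont f = f"
proof (rule Banach_fix)
  show "complete ball_paths"
    by (intro complete_eq_closed[THEN iffD2] closed_PiC) simp
  have "const_bcontfun y0 \<in> ball_paths"
    using b_pos by (simp add: mem_ball_paths)
  then show "ball_paths \<noteq> {}"
    by blast
qed (use contraction_const_nonneg contraction_const_less_one picard_bcont_in_ball_paths
    dist_picard_bcont_le in auto)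

abbreviation is_sol :: "(real \<Rightarrow> 'n state) \<Rightarrow> bool" where
  "is_sol \<equiv> is_solution \<beta> \<sigma> \<gamma> \<xi> \<eta> D R T b y0"

lemma picard_eq_of_is_solution:
  assumes "is_sol y" "t \<in> {0..T}"
  shows "picard y t = y t"
proof -
  have "((\<lambda>\<tau>. q (y \<tau>) + h t \<tau> y) has_integral (y t - y0)) {0..t}"
    using assms by (simp add: is_solution_def)
  then show ?thesis
    by (simp add: picard_def integral_unique)
qed

lemma is_solution_of_fixpoint:
  assumes f: "f \<in> ball_paths" "picard_bcont f = f"
  shows "is_sol (apply_bcontfun f)"
  unfolding is_solution_def
proof (intro conjI ballI)
  let ?y = "apply_bcontfun f"
  have ball: "?y s \<in> cball y0 b" for s
    using f(1) by (simp add: mem_ball_paths)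
  show "continuous_on {0..T} ?y"
    by simp
  fix t
  assume t: "t \<in> {0..T}"
  show "norm (?y t - y0) \<le> b"
    using ball[of t] by (simp add: dist_norm norm_minus_commute)
  have "?y t = picard ?y t"
    using apply_picard_bcont[OF f(1), of t] f(2) clamp_id[OF t] by simp
  then show "((\<lambda>\<tau>. q (?y \<tau>) + h t \<tau> ?y) has_integral (?y t - y0)) {0..t}"
    using integrable_integral[OF integrable_picard_integrand[OF _ ball]] by (simp add: picard_def)
qed

lemma clamp_extension_fixpoint:
  assumes y: "is_sol y"
  defines "f \<equiv> Bcontfun (\<lambda>t. y (clamp t))"
  shows "f \<in> ball_paths" "picard_bcont f = f" "\<And>t. t \<in> {0..T} \<Longrightarrow> apply_bcontfun f t = y t"
proof -
  have y_ball: "y t \<in> cball y0 b" if "t \<in> {0..T}" for t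
    using y that by (simp add: is_solution_def dist_norm norm_minus_commute)
  have "(\<lambda>t. y (clamp t)) \<in> bcontfun"
    using y y_ball by (intro clamp_extension_in_bcontfun) (simp_all add: is_solution_def)
  then have apply_f: "apply_bcontfun f t = y (clamp t)" for t
    unfolding f_def by (simp add: Bcontfun_inverse)
  show f: "f \<in> ball_paths"
    using y_ball[OF clamp_in] by (simp add: mem_ball_paths apply_f del: mem_cball)
  show f_eq: "apply_bcontfun f t = y t" if "t \<in> {0..T}" for t
    using that by (simp add: apply_f clamp_id)
  show "picard_bcont f = f"
  proof (rule bcontfun_eqI)
    fix t
    have "apply_bcontfun (picard_bcont f) t = picard (apply_bcontfun f) (clamp t)"
      by (rule apply_picard_bcont[OF f])
    also have "\<dots> = picard y (clamp t)"
      using clamp_in[of t] f_eq by (intro picard_cong) auto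
    also have "\<dots> = apply_bcontfun f t"
      using picard_eq_of_is_solution[OF y clamp_in] by (simp add: apply_f)
    finally show "apply_bcontfun (picard_bcont f) t = apply_bcontfun f t" .
  qed
qed

lemma ex1_solution: "\<exists>y. is_sol y \<and> (\<forall>y'. is_sol y' \<longrightarrow> (\<forall>t\<in>{0..T}. y' t = y t))"
proof -
  obtain f where f: "f \<in> ball_paths" "picard_bcont f = f"
    and unique: "\<And>g. g \<in> ball_paths \<Longrightarrow> picard_bcont g = g \<Longrightarrow> g = f"
    using ex1_fixpoint_picard_bcont by blast
  have "\<forall>t\<in>{0..T}. y' t = apply_bcontfun f t" if "is_sol y'" for y'
    using clamp_extension_fixpoint[OF that] unique by metis
  then show ?thesis
    using is_solution_of_fixpoint[OF f] by blast
qed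

end

text \<open>The Lipschitz hypothesis on \<open>pfun\<close> in the theorem quantifies over paths; two-point paths
  reduce it to the pointwise form assumed in \<open>local_wellposedness\<close>.\<close>

lemma Lipschitz_pointwise_of_paths:
  fixes P :: "real \<Rightarrow> 'a::real_normed_vector \<Rightarrow> 'a \<Rightarrow> 'b::real_normed_vector"
  assumes paths: "\<forall>\<tau> s (y1 :: real \<Rightarrow> 'a) y2.
      0 \<le> \<tau> \<and> \<tau> < s \<and> s \<le> a \<and> (\<forall>t\<in>{0..a}. y1 t \<in> K \<and> y2 t \<in> K) \<longrightarrow>
      norm (P (s - \<tau>) (y1 s) (y1 \<tau>) - P (s - \<tau>) (y2 s) (y2 \<tau>))
        \<le> sqrt (4 * D * (s - \<tau>)) * L * (norm (y1 s - y2 s) + norm (y1 \<tau> - y2 \<tau>))"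
    and r: "0 < r" "r \<le> a" and K: "u1 \<in> K" "u2 \<in> K" "v1 \<in> K" "v2 \<in> K"
  shows "norm (P r u1 v1 - P r u2 v2) \<le> sqrt (4 * D * r) * L * (norm (u1 - u2) + norm (v1 - v2))"
  using paths[rule_format, of 0 r "\<lambda>t. if t = r then u1 else v1" "\<lambda>t. if t = r then u2 else v2"] r K
  by simp

theorem theorem3p1:
  fixes \<beta> \<sigma> \<gamma> \<xi> \<eta> D R a b L1 L2 :: real
    and y0 :: "'n::finite state"
    and M1 M2 M T :: real
  assumes pos: "\<beta> > 0" "\<sigma> > 0" "\<gamma> > 0" "\<xi> > 0" "\<eta> > 0" "D > 0" "R > 0"
    and ab: "a > 0" "b > 0"
    and L1: "L1 > 0"
      "\<forall>u\<in>cball y0 b. \<forall>v\<in>cball y0 b.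
         norm (qfun \<beta> \<sigma> R u - qfun \<beta> \<sigma> R v) \<le> L1 * norm (u - v)"
    and L2: "L2 > 0"
      "\<forall>\<tau> s (y1 :: real \<Rightarrow> 'n state) y2.
         0 \<le> \<tau> \<and> \<tau> < s \<and> s \<le> a \<and> (\<forall>t\<in>{0..a}. y1 t \<in> cball y0 b \<and> y2 t \<in> cball y0 b) \<longrightarrow>
         norm (pfun D R (s - \<tau>) (y1 s) (y1 \<tau>) - pfun D R (s - \<tau>) (y2 s) (y2 \<tau>))
           \<le> sqrt (4 * D * (s - \<tau>)) * L2 * (norm (y1 s - y2 s) + norm (y1 \<tau> - y2 \<tau>))"
  and M1_def: "M1 =  Sup ((\<lambda>u. norm (qfun \<beta> \<sigma> R u)) ` cball y0 b)"
    and M2_def: "M2 = Sup {norm (hfun \<gamma> \<xi> \<eta> D R t \<tau> y) | t \<tau> (y :: real \<Rightarrow> 'n state).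
                   0 \<le> \<tau> \<and> \<tau> \<le> t \<and> t \<le> a \<and> continuous_on {0..a} y \<and>
                   (\<forall>s\<in>{0..a}. norm (y s - y0) \<le> b)}"
    and M_def: "M = integral {0..} (\<lambda>z. \<bar>Cfun \<gamma> \<xi> \<eta> D z\<bar> * sqrt (4 * D * z))"
    and T_def: "T = min a (min (b / (M1 + M2)) (1 / (L1 + 2 * L2 * M)))"
  shows "\<exists>y. is_solution \<beta> \<sigma> \<gamma> \<xi> \<eta> D R T b y0 y \<and>
             (\<forall>y'. is_solution \<beta> \<sigma> \<gamma> \<xi> \<eta> D R T b y0 y' \<longrightarrow> (\<forall>t\<in>{0..T}. y' t = y t))"
proof -
  interpret memory_kernel \<gamma> \<xi> \<eta> D R
    using pos by unfold_locales
  interpret local_wellposedness \<gamma> \<xi> \<eta> D R \<beta> \<sigma> a b L1 L2 y0 M1 M2 M T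
  proof unfold_locales
    show "L1-lipschitz_on (cball y0 b) (qfun \<beta> \<sigma> R)"
      using L1 by (simp add: lipschitz_on_def dist_norm)
    show "M = integral {0..} weight"
      by (simp add: M_def weight_def[abs_def])
  qed (use ab L2 M1_def M2_def T_def Lipschitz_pointwise_of_paths[OF L2(2)] in auto)
  show ?thesis
    by (rule ex1_solution)
qed

end
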